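(* Let $D$ be a database, $\mathcal{A}$ an automaton, and $w$ a walk of $D$ belonging to the walk semantics $\llbracket \mathcal{A}\rrbracket_W(D)$ (i.e. $w=\pi_D(r)$ for some run $r$ of $D\times\mathcal{A}$). Then there exist $n\ge 1$ and walks $u_1,v_1,u_2,\dots,v_n,u_{n+1}$ of $D$ such that $w=u_1v_1u_2\cdots v_nu_{n+1}$ (concatenation), every $u_i$ satisfies $\mathrm{src}(u_i)=\mathrm{tgt}(u_i)$, and the walk $v_1v_2\cdots v_n$ belongs to the simple-run semantics $\llbracket \mathcal{A}\rrbracket_{SR}(D)$.
   Context: A database is $D=(\Sigma,V,E,\mathrm{src},\mathrm{tgt},\mathrm{lbl})$ with $\Sigma$ a finite alphabet, $V$ a finite set of vertices, $E$ a finite set of edges, $\mathrm{src},\mathrm{tgt}:E\to V$ and $\mathrm{lbl}:E\to 2^\Sigma$. A walk is a sequence $(n_0,e_0,n_1,\dots,e_{k-1},n_k)$, $k\ge0$, of vertices and edges with $\mathrm{src}(e_i)=n_i$, $\mathrm{tgt}(e_i)=n_{i+1}$; its length is $k$, $\mathrm{src}(w)=n_0$, $\mathrm{tgt}(w)=n_k$, and $\mathrm{lbl}(w)=\{u_0\cdots u_{k-1}: u_i\in\mathrm{lbl}(e_i)\}$. Walks $w,w'$ with $\mathrm{tgt}(w)=\mathrm{src}(w')$ concatenate into $ww'$. A walk is simple if it repeats no vertex. An automaton is $\mathcal{A}=(\Sigma,Q,\Delta,I,F)$ with $\Delta\subseteq Q\times\Sigma\times Q$, initial states $I$ and final states $F$.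 The run database $D\times\mathcal{A}$ is the database with vertex set $V\times Q$, edge set $\{(e,(q,a,q'))\in E\times\Delta : a\in\mathrm{lbl}(e)\}$, where the edge $(e,(q,a,q'))$ has source $(\mathrm{src}(e),q)$, target $(\mathrm{tgt}(e),q')$ and label $\{a\}$. A run is a walk of $D\times\mathcal{A}$ starting in $V\times I$ and ending in $V\times F$. $\pi_D$ maps $(n,q)\mapsto n$, $(e,t)\mapsto e$, and walks componentwise. The walk semantics $\llbracket\mathcal{A}\rrbracket_W(D)$ is the bag $\{\pi_D(r): r \text{ run of } D\times\mathcal{A}\}$, and the simple-run semantics $\llbracket\mathcal{A}\rrbracket_{SR}(D)$ is the bag $\{\pi_D(r): r\text{ simple run of }D\times\mathcal{A}\}$ (a walk's multiplicity is the number of such runs projecting to it). *)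

theory Defs
  imports Main
begin

record ('a, 'v, 'e) db =
  Sigma :: "'a set"
  V :: "'v set"
  E :: "'e set"
  src :: "'e \<Rightarrow> 'v"
  tgt :: "'e \<Rightarrow> 'v"
  lbl :: "'e \<Rightarrow> 'a set"

definition db_wf :: "('a, 'v, 'e) db \<Rightarrow> bool" where
  "db_wf D \<longleftrightarrow> finite (Sigma D) \<and> finite (V D) \<and> finite (E D) \<and>
     (\<forall>e \<in> E D. src D e \<in> V D \<and> tgt D e \<in> V D \<and> lbl D e \<subseteq> Sigma D)"

record ('a, 'q) aut =
  ASigma :: "'a set"
  Q :: "'q set"
  Delta :: "('q \<times> 'a \<times> 'q) set"
  Init :: "'q set"
  Fin :: "'q set"

definition aut_wf :: "('a, 'q) aut \<Rightarrow> bool" where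
  "aut_wf A \<longleftrightarrow> finite (ASigma A) \<and> finite (Q A) \<and>
     Delta A \<subseteq> Q A \<times> ASigma A \<times> Q A \<and> Init A \<subseteq> Q A \<and> Fin A \<subseteq> Q A"

text \<open>A walk (n0, e0, n1, ..., e(k-1), nk) is represented by its first vertex
  and its list of edges; the remaining vertices are the targets of the edges.\<close>

type_synonym ('v, 'e) walk = "'v \<times> 'e list"

definition walk_src :: "('v, 'e) walk \<Rightarrow> 'v" where
  "walk_src w = fst w"

definition walk_vertices :: "('a, 'v, 'e) db \<Rightarrow> ('v, 'e) walk \<Rightarrow> 'v list" where
  "walk_vertices D w = fst w # map (tgt D) (snd w)"

definition walk_tgt :: "('a, 'v, 'e) db \<Rightarrow> ('v, 'e) walk \<Rightarrow> 'v" where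
  "walk_tgt D w = last (walk_vertices D w)"

definition walk_len :: "('v, 'e) walk \<Rightarrow> nat" where
  "walk_len w = length (snd w)"

definition is_walk :: "('a, 'v, 'e) db \<Rightarrow> ('v, 'e) walk \<Rightarrow> bool" where
  "is_walk D w \<longleftrightarrow> fst w \<in> V D \<and> set (snd w) \<subseteq> E D \<and>
     (\<forall>i < length (snd w). src D (snd w ! i) = walk_vertices D w ! i)"

definition simple_walk :: "('a, 'v, 'e) db \<Rightarrow> ('v, 'e) walk \<Rightarrow> bool" where
  "simple_walk D w \<longleftrightarrow> is_walk D w \<and> distinct (walk_vertices D w)"

definition concatenable :: "('a, 'v, 'e) db \<Rightarrow> ('v, 'e) walk list \<Rightarrow> bool" where
  "concatenable D ws \<longleftrightarrow>
     (\<forall>i. Suc i < length ws \<longrightarrow> walk_tgt D (ws ! i) = walk_src (ws ! Suc i))"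

definition concat_walks :: "('v, 'e) walk list \<Rightarrow> ('v, 'e) walk" where
  "concat_walks ws = (walk_src (hd ws), concat (map snd ws))"

fun interleave :: "'x list \<Rightarrow> 'x list \<Rightarrow> 'x list" where
  "interleave (u # us) (v # vs) = u # v # interleave us vs"
| "interleave us [] = us"
| "interleave [] vs = vs"

definition run_db :: "('a, 'v, 'e) db \<Rightarrow> ('a, 'q) aut
    \<Rightarrow> ('a, 'v \<times> 'q, 'e \<times> ('q \<times> 'a \<times> 'q)) db" where
  "run_db D A = \<lparr> Sigma = Sigma D,
     V = V D \<times> Q A,
     E = {(e, (q, a, q')). e \<in> E D \<and> (q, a, q') \<in> Delta A \<and> a \<in> lbl D e},
     src = (\<lambda>(e, (q, a, q')). (src D e, q)),
     tgt = (\<lambda>(e, (q, a, q')). (tgt D e, q')),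
     lbl = (\<lambda>(e, (q, a, q')). {a}) \<rparr>"

definition is_run :: "('a, 'v, 'e) db \<Rightarrow> ('a, 'q) aut
    \<Rightarrow> ('v \<times> 'q, 'e \<times> ('q \<times> 'a \<times> 'q)) walk \<Rightarrow> bool" where
  "is_run D A r \<longleftrightarrow> is_walk (run_db D A) r \<and>
     walk_src r \<in> V D \<times> Init A \<and> walk_tgt (run_db D A) r \<in> V D \<times> Fin A"

definition proj_D :: "('v \<times> 'q, 'e \<times> 't) walk \<Rightarrow> ('v, 'e) walk" where
  "proj_D r = (fst (fst r), map fst (snd r))"

text \<open>Support of the bag semantics (membership = positive multiplicity).\<close>

definition walk_sem :: "('a, 'v, 'e) db \<Rightarrow> ('a, 'q) aut \<Rightarrow> ('v, 'e) walk set" where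
  "walk_sem D A = {proj_D r | r. is_run D A r}"

definition sr_sem :: "('a, 'v, 'e) db \<Rightarrow> ('a, 'q) aut \<Rightarrow> ('v, 'e) walk set" where
  "sr_sem D A = {proj_D r | r. is_run D A r \<and> simple_walk (run_db D A) r}"

end

theory Submission
  imports Defs
begin

(* Loop erasure in the run database: a run is cut, at the last return to its starting
   vertex, into a closed walk followed by a walk that never comes back; the first edge of the
   latter is kept and the rest is erased recursively.  The kept edges form a simple run with
   the same endpoints, and the cut-out cycles of the run database project to closed walks
   of D.  Each v is a single kept edge, except for a final empty walk that makes n >= 1 even
   when nothing is kept. *)

lemma walk_vertices_Cons: "walk_vertices G (s, e # es) = s # walk_vertices G (tgt G e, es)"
  by (simp add: walk_vertices_def)

lemma walk_tgt_Nil [simp]: "walk_tgt G (s, []) = s"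
  by (simp add: walk_tgt_def walk_vertices_def)

lemma walk_tgt_Cons [simp]: "walk_tgt G (s, e # es) = walk_tgt G (tgt G e, es)"
  by (simp add: walk_tgt_def walk_vertices_def)

lemma walk_tgt_append: "walk_tgt G (s, es @ es') = walk_tgt G (walk_tgt G (s, es), es')"
  by (induction es arbitrary: s) auto

lemma is_walk_Nil [simp]: "is_walk G (s, []) \<longleftrightarrow> s \<in> V G"
  by (simp add: is_walk_def)

lemma is_walk_Cons:
  assumes "tgt G ` E G \<subseteq> V G"
  shows "is_walk G (s, e # es) \<longleftrightarrow>
           s \<in> V G \<and> e \<in> E G \<and> src G e = s \<and> is_walk G (tgt G e, es)"
  using assms unfolding is_walk_def walk_vertices_def by (auto simp: All_less_Suc2)

lemma is_walk_append:
  assumes "tgt G ` E G \<subseteq> V G"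
  shows "is_walk G (s, es @ es') \<longleftrightarrow> is_walk G (s, es) \<and> is_walk G (walk_tgt G (s, es), es')"
proof (induction es arbitrary: s)
  case Nil
  then show ?case by (auto simp: is_walk_def)
next
  case (Cons e es)
  then show ?case by (simp add: is_walk_Cons[OF assms])
qed

lemma concatenable_singleton [simp]: "concatenable G [w]"
  by (simp add: concatenable_def)

lemma concatenable_Cons:
  "ws \<noteq> [] \<Longrightarrow>
     concatenable G (w # ws) \<longleftrightarrow> walk_tgt G w = walk_src (hd ws) \<and> concatenable G ws"
proof (cases ws)
  case (Cons w' ws')
  have "(\<forall>i. Suc i < length (w # ws) \<longrightarrow> P i) \<longleftrightarrow> P 0 \<and> (\<forall>i. Suc i < length ws \<longrightarrow> P (Suc i))"
    for P using Cons by (auto simp: less_Suc_eq_0_disj)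
  then show ?thesis using Cons by (simp add: concatenable_def)
qed simp

lemma concat_walks_Cons:
  "ws \<noteq> [] \<Longrightarrow> concat_walks (w # ws) = (walk_src w, snd w @ snd (concat_walks ws))"
  by (simp add: concat_walks_def)

lemma map_interleave: "map f (interleave us vs) = interleave (map f us) (map f vs)"
  by (induction us vs rule: interleave.induct) auto

lemma split_at_last_return:
  obtains es1 es2 where "es = es1 @ es2" and "walk_tgt G (s, es1) = s"
    and "s \<notin> tgt G ` set es2"
proof (cases "\<exists>e \<in> set es. tgt G e = s")
  case True
  then obtain es1 e es2 where "es = es1 @ e # es2" "tgt G e = s" "\<forall>e' \<in> set es2. tgt G e' \<noteq> s"
    by (rule split_list_last_propE)
  then show thesis
    by (intro that[of "es1 @ [e]" es2]) (auto simp: walk_tgt_def walk_vertices_def)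
qed (auto intro: that[of "[]" es])

definition loop_decomposition ::
    "('a, 'v, 'e) db \<Rightarrow> ('v, 'e) walk \<Rightarrow> ('v, 'e) walk list \<Rightarrow> ('v, 'e) walk list \<Rightarrow> bool"
  where
  "loop_decomposition G w us vs \<longleftrightarrow> length us = length vs + 1 \<and> vs \<noteq> [] \<and>
     (\<forall>u \<in> set us. is_walk G u \<and> walk_src u = walk_tgt G u) \<and>
     (\<forall>v \<in> set vs. is_walk G v) \<and>
     concatenable G (interleave us vs) \<and>
     w = concat_walks (interleave us vs) \<and>
     concatenable G vs"

lemma loop_decomposition_Nil:
  assumes "is_walk G (s, es)" and "walk_tgt G (s, es) = s"
  shows "loop_decomposition G (s, es) [(s, es), (s, [])] [(s, [])]"
proof -
  have "s \<in> V G" using assms(1) by (simp add: is_walk_def)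
  then show ?thesis using assms
    by (simp add: loop_decomposition_def concatenable_Cons concat_walks_def walk_src_def)
qed

lemma loop_decomposition_Cons:
  assumes dec: "loop_decomposition G (tgt G e, es') us vs"
    and loop: "is_walk G (s, es)" "walk_tgt G (s, es) = s"
    and edge: "is_walk G (s, [e])"
  shows "loop_decomposition G (s, es @ e # es') ((s, es) # us) ((s, [e]) # vs)"
proof -
  obtain u us' v vs' where uv: "us = u # us'" "vs = v # vs'"
    using dec by (cases us; cases vs) (auto simp: loop_decomposition_def)
  have "walk_src u = tgt G e"
    using dec uv by (simp add: loop_decomposition_def concat_walks_def)
  moreover have "walk_tgt G u = walk_src v" "walk_src u = walk_tgt G u"
    using dec uv by (simp_all add: loop_decomposition_def concatenable_Cons)
  ultimately show ?thesis
    using dec loop edge uv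
    by (auto simp: loop_decomposition_def concatenable_Cons concat_walks_def walk_src_def)
qed

lemma loop_erasure:
  assumes closed: "tgt G ` E G \<subseteq> V G" and "is_walk G (s, es)"
  shows "\<exists>us vs es'. loop_decomposition G (s, es) us vs \<and> concat_walks vs = (s, es') \<and>
           simple_walk G (s, es') \<and> set es' \<subseteq> set es \<and> walk_tgt G (s, es') = walk_tgt G (s, es)"
  using assms(2)
proof (induction "length es" arbitrary: s es rule: less_induct)
  case less
  obtain es1 es2 where split: "es = es1 @ es2" "walk_tgt G (s, es1) = s" "s \<notin> tgt G ` set es2"
    by (rule split_at_last_return)
  have loop: "is_walk G (s, es1)" and rest: "is_walk G (s, es2)"
    using less.prems split is_walk_append[OF closed] by auto
  show ?case
  proof (cases es2)
    case Nil
    have "loop_decomposition G (s, es) [(s, es1), (s, [])] [(s, [])]"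
      using loop_decomposition_Nil[OF loop split(2)] split Nil by simp
    moreover have "simple_walk G (s, [])"
      using rest Nil by (simp add: simple_walk_def walk_vertices_def)
    moreover have "concat_walks [(s, [])] = (s, [])"
      by (simp add: concat_walks_def walk_src_def)
    ultimately show ?thesis
      using split Nil by fastforce
  next
    case (Cons e es3)
    have edge: "is_walk G (s, [e])" and tail: "is_walk G (tgt G e, es3)"
      using rest Cons closed by (auto simp: is_walk_Cons[OF closed])
    have "length es3 < length es" using split Cons by simp
    then obtain us vs es' where
      dec: "loop_decomposition G (tgt G e, es3) us vs" and
      erased: "concat_walks vs = (tgt G e, es')" "simple_walk G (tgt G e, es')"
        "set es' \<subseteq> set es3" "walk_tgt G (tgt G e, es') = walk_tgt G (tgt G e, es3)"
      using less.hyps tail by blast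
    have "vs \<noteq> []" using dec by (simp add: loop_decomposition_def)
    then have "concat_walks ((s, [e]) # vs) = (s, e # es')"
      using erased(1) by (simp add: concat_walks_Cons walk_src_def)
    moreover have "simple_walk G (s, e # es')"
    proof -
      have "s \<notin> set (walk_vertices G (tgt G e, es'))"
        using split(3) erased(3) Cons by (auto simp: walk_vertices_def)
      then show ?thesis
        using erased(2) edge by (simp add: simple_walk_def walk_vertices_Cons is_walk_Cons[OF closed])
    qed
    moreover have "walk_tgt G (s, e # es') = walk_tgt G (s, es)"
      using split Cons erased(4) by (simp add: walk_tgt_append)
    moreover have "set (e # es') \<subseteq> set es"
      using split Cons erased(3) by auto
    ultimately show ?thesis
      using loop_decomposition_Cons[OF dec loop split(2) edge] split(1) Cons by blast
  qed
qed

lemma run_db_tgt_closed: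
  assumes "db_wf D" and "aut_wf A"
  shows "tgt (run_db D A) ` E (run_db D A) \<subseteq> V (run_db D A)"
  using assms by (auto simp: run_db_def db_wf_def aut_wf_def)

lemma walk_vertices_proj_D:
  "walk_vertices D (proj_D w) = map fst (walk_vertices (run_db D A) w)"
  by (auto simp: walk_vertices_def proj_D_def run_db_def split: prod.splits)

lemma walk_src_proj_D: "walk_src (proj_D w) = fst (walk_src w)"
  by (simp add: walk_src_def proj_D_def)

lemma walk_tgt_proj_D: "walk_tgt D (proj_D w) = fst (walk_tgt (run_db D A) w)"
  unfolding walk_tgt_def walk_vertices_proj_D[of D w A] by (rule last_map) (simp add: walk_vertices_def)

lemma is_walk_proj_D:
  assumes walk: "is_walk (run_db D A) w"
  shows "is_walk D (proj_D w)"
proof -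
  let ?G = "run_db D A"
  have edge: "fst e \<in> E D \<and> src D (fst e) = fst (src ?G e)" if "e \<in> E ?G" for e
    using that by (auto simp: run_db_def)
  have "fst (fst w) \<in> V D"
    using walk by (auto simp: is_walk_def run_db_def)
  moreover have "set (map fst (snd w)) \<subseteq> E D"
    using walk edge by (auto simp: is_walk_def)
  moreover have "src D (fst (snd w ! i)) = walk_vertices D (proj_D w) ! i"
    if i: "i < length (snd w)" for i
  proof -
    have "snd w ! i \<in> E ?G" "src ?G (snd w ! i) = walk_vertices ?G w ! i"
      using walk i by (auto simp: is_walk_def)
    then have "src D (fst (snd w ! i)) = fst (walk_vertices ?G w ! i)"
      using edge by metis
    also have "\<dots> = walk_vertices D (proj_D w) ! i"
      unfolding walk_vertices_proj_D[of D w A] using i by (simp add: walk_vertices_def del: list.map)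
    finally show ?thesis .
  qed
  moreover have "fst (proj_D w) = fst (fst w)" "snd (proj_D w) = map fst (snd w)"
    by (simp_all add: proj_D_def)
  ultimately show ?thesis
    by (simp add: is_walk_def)
qed

lemma concatenable_proj_D:
  "concatenable (run_db D A) ws \<Longrightarrow> concatenable D (map proj_D ws)"
  by (simp add: concatenable_def walk_tgt_proj_D[of D _ A] walk_src_proj_D)

lemma concat_walks_proj_D:
  "ws \<noteq> [] \<Longrightarrow> concat_walks (map proj_D ws) = proj_D (concat_walks ws)"
  by (simp add: concat_walks_def proj_D_def walk_src_def hd_map map_concat comp_def)

lemma loop_decomposition_proj_D:
  assumes "loop_decomposition (run_db D A) w us vs"
  shows "loop_decomposition D (proj_D w) (map proj_D us) (map proj_D vs)"
proof -
  have "interleave us vs \<noteq> []"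
    using assms by (cases us; cases vs) (auto simp: loop_decomposition_def)
  then show ?thesis
    using assms
    by (auto simp: loop_decomposition_def map_interleave[symmetric] concat_walks_proj_D
        concatenable_proj_D is_walk_proj_D walk_src_proj_D walk_tgt_proj_D[of D _ A])
qed

theorem lemma13:
  fixes D :: "('a, 'v, 'e) db" and A :: "('a, 'q) aut" and w :: "('v, 'e) walk"
  assumes "db_wf D" and "aut_wf A" and "ASigma A = Sigma D"
    and "w \<in> walk_sem D A"
  shows "\<exists>n us vs. n \<ge> 1 \<and> length us = n + 1 \<and> length vs = n \<and>
           (\<forall>u \<in> set us. is_walk D u \<and> walk_src u = walk_tgt D u) \<and>
           (\<forall>v \<in> set vs. is_walk D v) \<and>
           concatenable D (interleave us vs) \<and>
           w = concat_walks (interleave us vs) \<and>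
           concatenable D vs \<and>
           concat_walks vs \<in> sr_sem D A"
proof -
  obtain s es where run: "is_run D A (s, es)" and w: "w = proj_D (s, es)"
    using assms(4) by (auto simp: walk_sem_def)
  then obtain us vs es' where
    dec: "loop_decomposition (run_db D A) (s, es) us vs" and
    erased: "concat_walks vs = (s, es')" "simple_walk (run_db D A) (s, es')"
      "walk_tgt (run_db D A) (s, es') = walk_tgt (run_db D A) (s, es)"
    using loop_erasure[OF run_db_tgt_closed[OF assms(1,2)]] by (meson is_run_def)
  have "is_run D A (s, es')"
    using run erased by (simp add: is_run_def simple_walk_def walk_src_def)
  then have "proj_D (s, es') \<in> sr_sem D A"
    using erased(2) unfolding sr_sem_def by blast
  moreover have "vs \<noteq> []"
    using dec by (simp add: loop_decomposition_def)
  ultimately have "concat_walks (map proj_D vs) \<in> sr_sem D A"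
    using erased(1) by (simp add: concat_walks_proj_D)
  moreover have "loop_decomposition D w (map proj_D us) (map proj_D vs)"
    using loop_decomposition_proj_D[OF dec] w by simp
  ultimately show ?thesis
    unfolding loop_decomposition_def
    by (intro exI[of _ "length vs"] exI[of _ "map proj_D us"] exI[of _ "map proj_D vs"])
      (simp add: Suc_le_eq)
qed

end
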